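(* For every $\alpha>\frac13$ and every $C>0$ there exists a Borel probability measure $\mu$ on $\mathbb{R}$ with $m_1(\mu)=0$, $m_2(\mu)=1$, $m_4(\mu)<\infty$ such that $$L(\mu,\mathbf{b})>C\,(m_4(\mu)-1)^{\alpha}.$$
   Context: $m_k(\mu)=\int x^k\,d\mu(x)$ (note $m_4(\mu)-1$ equals the fourth Boolean cumulant $r_4(\mu)$ for such $\mu$). $\mathbf{b}=\frac12\delta_{-1}+\frac12\delta_1$. The Lévy distance between probability measures with distribution functions $F,G$ is $L=\inf\{\epsilon>0: F(x-\epsilon)-\epsilon\le G(x)\le F(x+\epsilon)+\epsilon\ \forall x\in\mathbb{R}\}$. *)

theory Defs
  imports "HOL-Probability.Probability"
begin

definition bern_sym :: "real measure" where
  "bern_sym = measure_pmf (pmf_of_set {-1, 1})"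

definition levy_dist :: "(real \<Rightarrow> real) \<Rightarrow> (real \<Rightarrow> real) \<Rightarrow> real" where
  "levy_dist F G = Inf {e. e > 0 \<and> (\<forall>x. F (x - e) - e \<le> G x \<and> G x \<le> F (x + e) + e)}"

definition moment :: "real measure \<Rightarrow> nat \<Rightarrow> real" where
  "moment M k = (\<integral>x. x ^ k \<partial>M)"

end

theory Submission
  imports Defs
begin

text \<open>
  For small \<open>d > 0\<close> take the symmetric law putting mass \<open>d/2\<close> at \<open>\<plusminus>(1 - d)\<close> and mass
  \<open>(1 - d)/2\<close> at \<open>\<plusminus>b\<close>, with \<open>b\<close> chosen so that the variance is \<open>1\<close>. Its distribution
  function exceeds that of the symmetric Bernoulli law by \<open>d/2\<close> just below \<open>1\<close>, so the Levy
  distance is at least \<open>d/2\<close>, whereas the excess kurtosis \<open>m\<^sub>4 - 1 = d\<^sup>3 (2 - d)\<^sup>2 / (1 - d)\<close> is \<open>O(d\<^sup>3)\<close>.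
  Since \<open>3\<alpha> > 1\<close>, the quantity \<open>C (m\<^sub>4 - 1)\<^sup>\<alpha> = O(d\<^sup>3\<^sup>\<alpha>)\<close> is eventually below \<open>d/2\<close>.
\<close>

lemma le_levy_dist:
  assumes F: "\<And>x. 0 \<le> F x \<and> F x \<le> 1" and G: "\<And>x. 0 \<le> G x \<and> G x \<le> 1"
    and gap: "\<And>e. 0 < e \<Longrightarrow> e < \<delta> \<Longrightarrow> G (x + e) < F x - e"
  shows "\<delta> \<le> levy_dist F G"
  unfolding levy_dist_def
proof (rule cInf_greatest)
  have "F (x - 1) - 1 \<le> G x \<and> G x \<le> F (x + 1) + 1" for x
    using F[of "x - 1"] F[of "x + 1"] G[of x] by linarith
  then show "{e. e > 0 \<and> (\<forall>x. F (x - e) - e \<le> G x \<and> G x \<le> F (x + e) + e)} \<noteq> {}"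
    by (intro ex_in_conv[THEN iffD1] exI[of _ 1]) auto
next
  fix e assume "e \<in> {e. e > 0 \<and> (\<forall>x. F (x - e) - e \<le> G x \<and> G x \<le> F (x + e) + e)}"
  then have "0 < e" and "F (x + e - e) - e \<le> G (x + e)" by blast+
  then show "\<delta> \<le> e" using gap by force
qed

lemma cdf_bern_sym: "-1 \<le> x \<Longrightarrow> x < 1 \<Longrightarrow> cdf bern_sym x = 1/2"
proof -
  assume "-1 \<le> x" "x < 1"
  then have "{-1, 1::real} \<inter> {..x} = {-1}" by auto
  then show ?thesis unfolding cdf_def bern_sym_def
    by (subst measure_pmf_of_set) auto
qed

text \<open>
  \<open>sym_mix d a b\<close> is the law of \<open>\<epsilon> \<cdot> X\<close> with \<open>\<epsilon>\<close> a fair sign and, independently,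
  \<open>X = a\<close> with probability \<open>d\<close> and \<open>X = b\<close> otherwise.
\<close>
definition sym_mix :: "real \<Rightarrow> real \<Rightarrow> real \<Rightarrow> real measure" where
  "sym_mix d a b = distr (measure_pmf (pair_pmf (bernoulli_pmf d) (pmf_of_set {-1, 1})))
     borel (\<lambda>(c, s). s * (if c then a else b))"

lemma sets_sym_mix [simp]: "sets (sym_mix d a b) = sets borel"
  by (simp add: sym_mix_def)

lemma prob_space_sym_mix: "prob_space (sym_mix d a b)"
  unfolding sym_mix_def
  by (rule prob_space.prob_space_distr) (auto simp: prob_space_measure_pmf)

lemma pmf_sign_pair:
  assumes "0 < d" "d < 1" "s \<in> {-1, 1::real}"
  shows "pmf (pair_pmf (bernoulli_pmf d) (pmf_of_set {-1, 1::real})) (c, s) = (if c then d else 1 - d) / 2"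
  using assms by (auto simp: pmf_pair)

lemma
  assumes "0 < d" "d < 1" and [measurable]: "g \<in> borel_measurable borel"
  shows integrable_sym_mix: "integrable (sym_mix d a b) g"
    and integral_sym_mix:
      "(\<integral>x. g x \<partial>sym_mix d a b) = d/2 * (g a + g (-a)) + (1 - d)/2 * (g b + g (-b))"
proof -
  define p where "p = pair_pmf (bernoulli_pmf d) (pmf_of_set {-1, 1::real})"
  define f where "f = (\<lambda>(c, s). s * (if c then a else b))"
  have set_p: "set_pmf p = UNIV \<times> {-1, 1}" using assms by (simp add: p_def)
  have [measurable]: "f \<in> measurable (measure_pmf p) borel" by simp
  have mix: "sym_mix d a b = distr (measure_pmf p) borel f" by (simp add: sym_mix_def p_def f_def)
  show "integrable (sym_mix d a b) g"
    unfolding mix using set_p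
    by (subst integrable_distr_eq) (auto intro!: integrable_measure_pmf_finite)
  have "(\<integral>x. g x \<partial>sym_mix d a b) = (\<integral>z. g (f z) \<partial>measure_pmf p)"
    unfolding mix by (rule integral_distr) auto
  also have "\<dots> = (\<Sum>z\<in>UNIV \<times> {-1, 1}. g (f z) * pmf p z)"
    by (rule integral_measure_pmf_real) (auto simp: set_p)
  also have "\<dots> = d/2 * (g a + g (-a)) + (1 - d)/2 * (g b + g (-b))"
    using assms by (simp add: UNIV_bool p_def pmf_sign_pair f_def algebra_simps) (simp add: field_simps)
  finally show "(\<integral>x. g x \<partial>sym_mix d a b) = \<dots>" .
qed

lemma cdf_sym_mix_ge:
  assumes "0 < d" "d < 1" "0 \<le> a" "0 \<le> b"
  shows "1/2 + d/2 \<le> cdf (sym_mix d a b) a"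
proof -
  define p where "p = pair_pmf (bernoulli_pmf d) (pmf_of_set {-1, 1::real})"
  have "cdf (sym_mix d a b) a = measure p ((\<lambda>(c, s). s * (if c then a else b)) -` {..a})"
    unfolding cdf_def sym_mix_def p_def by (subst measure_distr) auto
  moreover have "measure p {(True, 1), (True, -1), (False, -1)} \<le> \<dots>"
    by (rule measure_pmf.finite_measure_mono) (use assms in auto)
  moreover have "measure p {(True, 1), (True, -1), (False, -1)} = 1/2 + d/2"
    using assms unfolding p_def
    by (subst measure_measure_pmf_finite) (auto simp: pmf_sign_pair field_simps)
  ultimately show ?thesis by simp
qed

text \<open>The scale \<open>b\<close> makes \<open>d (1 - d)\<^sup>2 + (1 - d) b\<^sup>2 = 1\<close>.\<close>
definition kurtosis_witness :: "real \<Rightarrow> real measure" where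
  "kurtosis_witness d = sym_mix d (1 - d) (sqrt ((1 - d * (1 - d)\<^sup>2) / (1 - d)))"

context
  fixes d :: real
  assumes d_pos: "0 < d" and d_le: "d \<le> 1/2"
begin

private lemma witness_variance_pos: "0 < (1 - d * (1 - d)\<^sup>2) / (1 - d)"
proof -
  have "(1 - d)\<^sup>2 < 1" using d_pos d_le by (simp add: power_less_one_iff)
  moreover have "d * (1 - d)\<^sup>2 \<le> (1 - d)\<^sup>2" using d_pos d_le by (intro mult_left_le_one_le) auto
  ultimately have "d * (1 - d)\<^sup>2 < 1" by linarith
  then show ?thesis using d_le by (intro divide_pos_pos) auto
qed

private lemma integral_kurtosis_witness_even:
  assumes "even k"
  shows "(\<integral>x. x ^ k \<partial>kurtosis_witness d)
    = d * (1 - d) ^ k + (1 - d) * ((1 - d * (1 - d)\<^sup>2) / (1 - d)) ^ (k div 2)"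
proof -
  define v where "v = (1 - d * (1 - d)\<^sup>2) / (1 - d)"
  have "(d - 1) ^ k = (1 - d) ^ k"
    using assms by (metis minus_diff_eq power_minus_even)
  moreover have "sqrt v ^ k = v ^ (k div 2)"
    using assms witness_variance_pos unfolding v_def
    by (metis dvd_mult_div_cancel power_mult real_sqrt_pow2 less_imp_le)
  ultimately show ?thesis
    using integral_sym_mix[of d "\<lambda>x. x ^ k" "1 - d" "sqrt v"] d_pos d_le
    by (simp add: kurtosis_witness_def v_def power_minus_even assms)
qed

lemma integrable_power_kurtosis_witness: "integrable (kurtosis_witness d) (\<lambda>x. x ^ k)"
  unfolding kurtosis_witness_def using d_pos d_le by (intro integrable_sym_mix) auto

lemma moment_1_kurtosis_witness: "moment (kurtosis_witness d) 1 = 0"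
  unfolding moment_def kurtosis_witness_def using d_pos d_le
  by (simp add: integral_sym_mix)

lemma moment_2_kurtosis_witness: "moment (kurtosis_witness d) 2 = 1"
  unfolding moment_def using integral_kurtosis_witness_even[of 2] d_le by simp

lemma excess_moment_4_kurtosis_witness:
  "moment (kurtosis_witness d) 4 - 1 = d^3 * (2 - d)\<^sup>2 / (1 - d)"
proof -
  have "moment (kurtosis_witness d) 4 = d * (1 - d)^4 + (1 - d * (1 - d)\<^sup>2)\<^sup>2 / (1 - d)"
    unfolding moment_def using integral_kurtosis_witness_even[of 4] d_le
    by (simp add: power2_eq_square)
  also have "\<dots> = 1 + d^3 * (2 - d)\<^sup>2 / (1 - d)"
    using d_le by (simp add: field_simps) (simp add: algebra_simps power2_eq_square power3_eq_cube power4_eq_xxxx)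
  finally show ?thesis by simp
qed

lemma excess_moment_4_kurtosis_witness_bounds:
  "0 \<le> moment (kurtosis_witness d) 4 - 1 \<and> moment (kurtosis_witness d) 4 - 1 \<le> 8 * d^3"
proof -
  have "(2 - d)\<^sup>2 \<le> 2\<^sup>2" using d_pos d_le by (intro power_mono) auto
  then have "(2 - d)\<^sup>2 / (1 - d) \<le> 8" using d_le by (simp add: field_simps)
  then have "d^3 * ((2 - d)\<^sup>2 / (1 - d)) \<le> d^3 * 8" using d_pos by (intro mult_left_mono) auto
  then show ?thesis using d_pos d_le excess_moment_4_kurtosis_witness by simp
qed

lemma levy_dist_kurtosis_witness: "d/2 \<le> levy_dist (cdf (kurtosis_witness d)) (cdf bern_sym)"
proof (rule le_levy_dist)
  have cdf_bounds: "0 \<le> cdf M x \<and> cdf M x \<le> 1" if "prob_space M" for M x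
    using that by (simp add: cdf_def prob_space.prob_le_1)
  show "0 \<le> cdf (kurtosis_witness d) x \<and> cdf (kurtosis_witness d) x \<le> 1" for x
    unfolding kurtosis_witness_def by (intro cdf_bounds prob_space_sym_mix)
  show "0 \<le> cdf bern_sym x \<and> cdf bern_sym x \<le> 1" for x
    unfolding bern_sym_def by (intro cdf_bounds prob_space_measure_pmf)
  fix e assume "0 < e" "e < d/2"
  then have "cdf bern_sym (1 - d + e) = 1/2" using d_le by (intro cdf_bern_sym) auto
  moreover have "1/2 + d/2 \<le> cdf (kurtosis_witness d) (1 - d)"
    unfolding kurtosis_witness_def using d_pos d_le witness_variance_pos
    by (intro cdf_sym_mix_ge) auto
  ultimately show "cdf bern_sym (1 - d + e) < cdf (kurtosis_witness d) (1 - d) - e"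
    using \<open>e < d/2\<close> by simp
qed

end

lemma small_cube_power_lt:
  fixes \<alpha> C :: real
  assumes "\<alpha> > 1/3" and "C > 0"
  obtains d where "0 < d" "d \<le> 1/2" "C * (8 * d^3) powr \<alpha> < d/2"
proof -
  define K where "K = 1 / (4 * C * 8 powr \<alpha>)"
  have K_pos: "K > 0" using assms by (simp add: K_def)
  define d where "d = min (1/2) (K powr (1 / (3*\<alpha> - 1)))"
  have d_pos: "0 < d" and d_le: "d \<le> 1/2" using K_pos by (auto simp: d_def)
  have "d powr (3*\<alpha> - 1) \<le> (K powr (1 / (3*\<alpha> - 1))) powr (3*\<alpha> - 1)"
    using d_pos assms(1) by (intro powr_mono2) (auto simp: d_def)
  also have "\<dots> = K" using K_pos assms(1) by (simp add: powr_powr)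
  finally have dK: "d powr (3*\<alpha> - 1) \<le> K" .
  have "(8 * d^3) powr \<alpha> = 8 powr \<alpha> * (d powr 3) powr \<alpha>"
    using d_pos by (simp add: powr_mult powr_realpow)
  also have "\<dots> = 8 powr \<alpha> * d powr (1 + (3*\<alpha> - 1))"
    by (simp only: powr_powr) simp
  also have "\<dots> = 8 powr \<alpha> * (d * d powr (3*\<alpha> - 1))"
    using d_pos by (subst powr_add) simp
  finally have "C * (8 * d^3) powr \<alpha> \<le> C * 8 powr \<alpha> * d * K"
    using dK assms d_pos by (simp add: mult.assoc mult_left_mono)
  also have "\<dots> = d/4" using assms by (simp add: K_def)
  finally show ?thesis using that d_pos d_le by simp
qed

theorem mainTheorem5:
  fixes \<alpha> C :: real
  assumes "\<alpha> > 1/3" and "C > 0"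
  shows "\<exists>\<mu> :: real measure. sets \<mu> = sets borel \<and> prob_space \<mu> \<and>
    integrable \<mu> (\<lambda>x. x) \<and> integrable \<mu> (\<lambda>x. x ^ 2) \<and> integrable \<mu> (\<lambda>x. x ^ 4) \<and>
    moment \<mu> 1 = 0 \<and> moment \<mu> 2 = 1 \<and>
    levy_dist (cdf \<mu>) (cdf bern_sym) > C * (moment \<mu> 4 - 1) powr \<alpha>"
proof -
  obtain d where d: "0 < d" "d \<le> 1/2" and small: "C * (8 * d^3) powr \<alpha> < d/2"
    using small_cube_power_lt assms by blast
  let ?\<mu> = "kurtosis_witness d"
  have "C * (moment ?\<mu> 4 - 1) powr \<alpha> \<le> C * (8 * d^3) powr \<alpha>"
    using assms excess_moment_4_kurtosis_witness_bounds[OF d]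
    by (intro mult_left_mono powr_mono2) auto
  also note small
  also have "d/2 \<le> levy_dist (cdf ?\<mu>) (cdf bern_sym)" by (rule levy_dist_kurtosis_witness[OF d])
  finally show ?thesis
    using integrable_power_kurtosis_witness[OF d, of 1] integrable_power_kurtosis_witness[OF d]
      moment_1_kurtosis_witness[OF d] moment_2_kurtosis_witness[OF d]
    by (intro exI[of _ ?\<mu>]) (simp add: kurtosis_witness_def prob_space_sym_mix)
qed

end
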